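(* Let $A=(a_{i,j})\in\Theta_\vartriangle(n)$ have all diagonal entries zero, write $A=A^++A^-$ with $A^+$ (resp. $A^-$) the matrix keeping the entries $a_{i,j}$ with $i<j$ (resp. $i>j$) and zero elsewhere, and let $\lambda\in\mathbb N^n_\vartriangle$. Define $\mu,\nu\in\mathbb N^n_\vartriangle$ by $\mu_i=\lambda_i+\sum_{k<i}a_{i,k}$ and $\nu_i=\lambda_i+\sum_{k<i}a_{k,i}$. Then $$d_{A+\mathrm{diag}(\lambda)}=d_{A^++\mathrm{diag}(\mu)}+d_{A^-+\mathrm{diag}(\nu)}.$$
   Context: $\Theta_\vartriangle(n)$ is the set of matrices $B=(b_{i,j})_{i,j\in\mathbb Z}$ with $b_{i,j}\in\mathbb N$, $b_{i+n,j+n}=b_{i,j}$ and finitely many nonzero entries in each row. $\mathbb N^n_\vartriangle$ is the set of $n$-periodic sequences $(\lambda_i)_{i\in\mathbb Z}$ of nonnegative integers, and $\mathrm{diag}(\lambda)$ is the diagonal matrix with $(i,i)$ entry $\lambda_i$. For $B\in\Theta_\vartriangle(n)$, $d_B=\sum b_{i,j}b_{k,l}$, summing over all $i,j,k,l\in\mathbb Z$ with $1\le i\le n$, $k\le i$ and $j<l$. *)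

theory Defs
  imports Main
begin

type_synonym mat = "int \<Rightarrow> int \<Rightarrow> nat"

definition Theta :: "nat \<Rightarrow> mat set" where
  "Theta n = {B. (\<forall>i j. B (i + int n) (j + int n) = B i j) \<and>
                 (\<forall>i. finite {j. B i j \<noteq> 0})}"

definition Nseq :: "nat \<Rightarrow> (int \<Rightarrow> nat) set" where
  "Nseq n = {lam. \<forall>i. lam (i + int n) = lam i}"

definition diagm :: "(int \<Rightarrow> nat) \<Rightarrow> mat" where
  "diagm lam = (\<lambda>i j. if i = j then lam i else 0)"

definition madd :: "mat \<Rightarrow> mat \<Rightarrow> mat" where
  "madd A B = (\<lambda>i j. A i j + B i j)"

definition upper_part :: "mat \<Rightarrow> mat" where
  "upper_part A = (\<lambda>i j. if i < j then A i j else 0)"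

definition lower_part :: "mat \<Rightarrow> mat" where
  "lower_part A = (\<lambda>i j. if i > j then A i j else 0)"

text \<open>d_B = sum of b_{i,j} b_{k,l} over 1 \<le> i \<le> n, k \<le> i, j < l.
  Only nonzero terms are summed; for B in Theta n this index set is finite.\<close>
definition dB :: "nat \<Rightarrow> mat \<Rightarrow> nat" where
  "dB n B = (\<Sum>(i, j, k, l) \<in> {(i, j, k, l). 1 \<le> i \<and> i \<le> int n \<and> k \<le> i \<and> j < l
                                   \<and> B i j * B k l \<noteq> 0}. B i j * B k l)"

definition mu_seq :: "mat \<Rightarrow> (int \<Rightarrow> nat) \<Rightarrow> int \<Rightarrow> nat" where
  "mu_seq A lam = (\<lambda>i. lam i + (\<Sum>k \<in> {k. k < i \<and> A i k \<noteq> 0}. A i k))"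

definition nu_seq :: "mat \<Rightarrow> (int \<Rightarrow> nat) \<Rightarrow> int \<Rightarrow> nat" where
  "nu_seq A lam = (\<lambda>i. lam i + (\<Sum>k \<in> {k. k < i \<and> A k i \<noteq> 0}. A k i))"

end

theory Submission imports Defs begin

text \<open>Since A has zero diagonal, A + diag(lambda) = U + L + D with U strictly upper, L strictly
  lower and D diagonal, and d is the diagonal value of a bilinear form d(X, Y). Of its nine
  cross terms, d(U, D), d(D, L), d(U, L) and d(D, D) vanish for order reasons, so the claim
  reduces to d(L, U) = d(diag m, U) + d(L, diag n), where m and n are the row and column sums
  added to lambda in mu and nu. For this, split d(L, U) according to whether the column l of
  the U-entry lies right of the row i of the L-entry: if so, the constraint j < l on the
  column of the L-entry is vacuous and summing over j yields m i; otherwise the constraint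
  k <= i on the row of the U-entry is vacuous and summing over k yields n l. Periodicity only
  serves to make all matrices banded, so that every sum can be taken over one finite window.\<close>

definition banded :: "nat \<Rightarrow> mat \<Rightarrow> bool" where
  "banded R B \<longleftrightarrow> (\<forall>i j. B i j \<noteq> 0 \<longrightarrow> \<bar>i - j\<bar> \<le> int R)"

lemma banded_dist: "banded R B \<Longrightarrow> B i j \<noteq> 0 \<Longrightarrow> \<bar>i - j\<bar> \<le> int R"
  unfolding banded_def by blast

lemma banded_madd: "banded R X \<Longrightarrow> banded R Y \<Longrightarrow> banded R (madd X Y)"
  unfolding banded_def madd_def by auto

lemma banded_diagm: "banded R (diagm d)"
  unfolding banded_def diagm_def by auto

lemma banded_upper_part: "banded R X \<Longrightarrow> banded R (upper_part X)"
  unfolding banded_def upper_part_def by (auto simp: abs_le_iff)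

lemma banded_lower_part: "banded R X \<Longrightarrow> banded R (lower_part X)"
  unfolding banded_def lower_part_def by (auto simp: abs_le_iff)

lemma periodic_shift:
  assumes per: "\<forall>i j. A (i + int n) (j + int n) = A i j"
  shows "A (i + q * int n) (j + q * int n) = A i j"
proof (induction q arbitrary: i j rule: int_induct[where k = 0])
  case base
  show ?case by simp
next
  case (step1 q)
  have "A (i + (q + 1) * int n) (j + (q + 1) * int n) = A (i + q * int n + int n) (j + q * int n + int n)"
    by (simp add: algebra_simps)
  then show ?case using per step1.IH by simp
next
  case (step2 q)
  have "A (i + (q - 1) * int n) (j + (q - 1) * int n)
      = A (i + (q - 1) * int n + int n) (j + (q - 1) * int n + int n)"
    using per by simp
  also have "\<dots> = A (i + q * int n) (j + q * int n)"
    by (simp add: algebra_simps)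
  finally show ?case using step2.IH by simp
qed

text \<open>Every row of a matrix in Theta n is finitely supported, and by periodicity there are
  only n rows up to translation.\<close>
lemma Theta_banded:
  assumes "A \<in> Theta n" "0 < n"
  obtains R where "banded R A"
proof
  let ?S = "\<Union>r\<in>{0..<int n}. (\<lambda>j. \<bar>r - j\<bar>) ` {j. A r j \<noteq> 0}"
  have fin: "finite ?S" using assms(1) unfolding Theta_def by auto
  have per: "\<forall>i j. A (i + int n) (j + int n) = A i j" using assms(1) unfolding Theta_def by auto
  show "banded (nat (Max ?S)) A" unfolding banded_def
  proof (intro allI impI)
    fix i j assume nz: "A i j \<noteq> 0"
    define r q where "r = i mod int n" and "q = i div int n"
    have i: "i = r + q * int n" unfolding r_def q_def by simp
    have "A r (j - q * int n) = A (r + q * int n) (j - q * int n + q * int n)"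
      by (rule periodic_shift[OF per, symmetric])
    also have "\<dots> = A i j" using i by simp
    finally have "A r (j - q * int n) \<noteq> 0" using nz by simp
    moreover have "r \<in> {0..<int n}" unfolding r_def using assms(2) by simp
    ultimately have "\<bar>r - (j - q * int n)\<bar> \<in> ?S" by blast
    then have "\<bar>r - (j - q * int n)\<bar> \<le> Max ?S" using fin by simp
    moreover have "\<bar>r - (j - q * int n)\<bar> = \<bar>i - j\<bar>" using i by (simp add: algebra_simps)
    ultimately show "\<bar>i - j\<bar> \<le> int (nat (Max ?S))" by linarith
  qed
qed

definition dform :: "nat \<Rightarrow> int set \<Rightarrow> mat \<Rightarrow> mat \<Rightarrow> nat" where
  "dform n W X Y = (\<Sum>i\<in>{1..int n}. \<Sum>j\<in>W. \<Sum>k\<in>W. \<Sum>l\<in>W.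
      of_bool (k \<le> i \<and> j < l) * X i j * Y k l)"

lemma dB_eq_dform:
  assumes B: "banded R B" and W: "finite W" "{1 - 2 * int R .. int n + int R} \<subseteq> W"
  shows "dB n B = dform n W B B"
proof -
  let ?T = "{(i, j, k, l). 1 \<le> i \<and> i \<le> int n \<and> k \<le> i \<and> j < l \<and> B i j * B k l \<noteq> 0}"
  have "?T \<subseteq> {1..int n} \<times> W \<times> W \<times> W"
  proof
    fix x assume "x \<in> ?T"
    then obtain i j k l where x: "x = (i, j, k, l)" and ijkl: "1 \<le> i" "i \<le> int n" "k \<le> i" "j < l"
      and nz: "B i j \<noteq> 0" "B k l \<noteq> 0" by auto
    have "\<bar>i - j\<bar> \<le> int R" "\<bar>k - l\<bar> \<le> int R" using banded_dist[OF B] nz by auto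
    then have "{j, k, l} \<subseteq> {1 - 2 * int R .. int n + int R}" using ijkl by auto
    then show "x \<in> {1..int n} \<times> W \<times> W \<times> W" using W(2) ijkl x by auto
  qed
  then have "dB n B = (\<Sum>(i, j, k, l) \<in> {1..int n} \<times> W \<times> W \<times> W.
      of_bool (k \<le> i \<and> j < l) * B i j * B k l)"
    unfolding dB_def by (intro sum.mono_neutral_cong_left) (use W(1) in auto)
  then show ?thesis
    unfolding dform_def by (simp add: sum.cartesian_product)
qed

lemma dform_madd_left: "dform n W (madd X Y) Z = dform n W X Z + dform n W Y Z"
  unfolding dform_def madd_def by (simp add: sum.distrib distrib_left distrib_right)

lemma dform_madd_right: "dform n W Z (madd X Y) = dform n W Z X + dform n W Z Y"
  unfolding dform_def madd_def by (simp add: sum.distrib distrib_left distrib_right)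

lemma dform_eq_0I:
  assumes "\<And>i j k l. k \<le> i \<Longrightarrow> j < l \<Longrightarrow> X i j * Y k l = 0"
  shows "dform n W X Y = 0"
  unfolding dform_def using assms by (intro sum.neutral ballI) (simp add: mult.assoc)

lemma dform_diagm_diagm: "dform n W (diagm d) (diagm e) = 0"
  by (rule dform_eq_0I) (auto simp: diagm_def)

lemma dform_upper_diagm: "dform n W (upper_part X) (diagm d) = 0"
  by (rule dform_eq_0I) (auto simp: diagm_def upper_part_def)

lemma dform_diagm_lower: "dform n W (diagm d) (lower_part X) = 0"
  by (rule dform_eq_0I) (auto simp: diagm_def lower_part_def)

lemma dform_upper_lower: "dform n W (upper_part X) (lower_part Y) = 0"
  by (rule dform_eq_0I) (auto simp: upper_part_def lower_part_def)

lemma dform_diagm_left: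
  assumes "finite W" "{1..int n} \<subseteq> W"
  shows "dform n W (diagm d) Y =
    (\<Sum>i\<in>{1..int n}. \<Sum>k\<in>W. \<Sum>l\<in>W. of_bool (k \<le> i \<and> i < l) * d i * Y k l)"
  unfolding dform_def
proof (rule sum.cong[OF refl])
  fix i assume "i \<in> {1..int n}"
  have "(\<Sum>j\<in>W. \<Sum>k\<in>W. \<Sum>l\<in>W. of_bool (k \<le> i \<and> j < l) * diagm d i j * Y k l)
      = (\<Sum>j\<in>W. if i = j then \<Sum>k\<in>W. \<Sum>l\<in>W. of_bool (k \<le> i \<and> j < l) * d i * Y k l else 0)"
    by (intro sum.cong refl) (simp add: diagm_def)
  also have "\<dots> = (\<Sum>k\<in>W. \<Sum>l\<in>W. of_bool (k \<le> i \<and> i < l) * d i * Y k l)"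
    using assms \<open>i \<in> {1..int n}\<close> by auto
  finally show "(\<Sum>j\<in>W. \<Sum>k\<in>W. \<Sum>l\<in>W. of_bool (k \<le> i \<and> j < l) * diagm d i j * Y k l)
      = (\<Sum>k\<in>W. \<Sum>l\<in>W. of_bool (k \<le> i \<and> i < l) * d i * Y k l)" .
qed

lemma dform_diagm_right:
  assumes "finite W"
  shows "dform n W X (diagm d) =
    (\<Sum>i\<in>{1..int n}. \<Sum>j\<in>W. \<Sum>l\<in>W. of_bool (l \<le> i \<and> j < l) * X i j * d l)"
  unfolding dform_def
proof (rule sum.cong[OF refl], rule sum.cong[OF refl])
  fix i j
  have "(\<Sum>k\<in>W. \<Sum>l\<in>W. of_bool (k \<le> i \<and> j < l) * X i j * diagm d k l)
      = (\<Sum>l\<in>W. \<Sum>k\<in>W. if l = k then of_bool (k \<le> i \<and> j < l) * X i j * d l else 0)"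
    by (subst sum.swap) (intro sum.cong refl, simp add: diagm_def)
  also have "\<dots> = (\<Sum>l\<in>W. of_bool (l \<le> i \<and> j < l) * X i j * d l)"
    using assms by simp
  finally show "(\<Sum>k\<in>W. \<Sum>l\<in>W. of_bool (k \<le> i \<and> j < l) * X i j * diagm d k l)
      = (\<Sum>l\<in>W. of_bool (l \<le> i \<and> j < l) * X i j * d l)" .
qed

lemma sum_nonzero_eq_sum_window:
  fixes f :: "'a \<Rightarrow> 'b::comm_semiring_1"
  assumes "finite W" "{k. P k \<and> f k \<noteq> 0} \<subseteq> W"
  shows "(\<Sum>k\<in>{k. P k \<and> f k \<noteq> 0}. f k) = (\<Sum>k\<in>W. of_bool (P k) * f k)"
  by (rule sum.mono_neutral_cong_left) (use assms in auto)

definition lower_row_sum :: "mat \<Rightarrow> int \<Rightarrow> nat" where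
  "lower_row_sum A i = (\<Sum>k \<in> {k. k < i \<and> A i k \<noteq> 0}. A i k)"

definition upper_col_sum :: "mat \<Rightarrow> int \<Rightarrow> nat" where
  "upper_col_sum A i = (\<Sum>k \<in> {k. k < i \<and> A k i \<noteq> 0}. A k i)"

lemma lower_row_sum_eq_sum_window:
  assumes "banded R A" "finite W" "{i - int R ..< i} \<subseteq> W"
  shows "lower_row_sum A i = (\<Sum>j\<in>W. of_bool (j < i) * A i j)"
  unfolding lower_row_sum_def
proof (rule sum_nonzero_eq_sum_window[OF assms(2)], rule subsetI)
  fix j assume "j \<in> {j. j < i \<and> A i j \<noteq> 0}"
  then have "j < i" "\<bar>i - j\<bar> \<le> int R" using banded_dist[OF assms(1), of i j] by simp_all
  then show "j \<in> W" using assms(3) by auto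
qed

lemma upper_col_sum_eq_sum_window:
  assumes "banded R A" "finite W" "{l - int R ..< l} \<subseteq> W"
  shows "upper_col_sum A l = (\<Sum>k\<in>W. of_bool (k < l) * A k l)"
  unfolding upper_col_sum_def
proof (rule sum_nonzero_eq_sum_window[OF assms(2)], rule subsetI)
  fix k assume "k \<in> {k. k < l \<and> A k l \<noteq> 0}"
  then have "k < l" "\<bar>k - l\<bar> \<le> int R" using banded_dist[OF assms(1), of k l] by simp_all
  then show "k \<in> W" using assms(3) by auto
qed

lemma dform_diagm_lower_row_sum:
  assumes A: "banded R A" and W: "finite W" "{1 - 2 * int R .. int n + int R} \<subseteq> W"
  shows "dform n W (diagm (lower_row_sum A)) Y =
    (\<Sum>i\<in>{1..int n}. \<Sum>j\<in>W. \<Sum>k\<in>W. \<Sum>l\<in>W.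
      of_bool (k \<le> i \<and> i < l) * (of_bool (j < i) * A i j) * Y k l)"
proof -
  have "{1..int n} \<subseteq> W" using W(2) by auto
  show ?thesis
    unfolding dform_diagm_left[OF W(1) \<open>{1..int n} \<subseteq> W\<close>]
  proof (rule sum.cong[OF refl])
    fix i assume "i \<in> {1..int n}"
    then have row: "lower_row_sum A i = (\<Sum>j\<in>W. of_bool (j < i) * A i j)"
      using W by (intro lower_row_sum_eq_sum_window[OF A W(1)]) auto
    let ?c = "\<lambda>j k l. of_bool (k \<le> i \<and> i < l) * (of_bool (j < i) * A i j) * Y k l"
    have "(\<Sum>k\<in>W. \<Sum>l\<in>W. of_bool (k \<le> i \<and> i < l) * lower_row_sum A i * Y k l)
        = (\<Sum>k\<in>W. \<Sum>l\<in>W. \<Sum>j\<in>W. ?c j k l)"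
      unfolding row by (simp only: sum_distrib_left sum_distrib_right)
    also have "\<dots> = (\<Sum>k\<in>W. \<Sum>j\<in>W. \<Sum>l\<in>W. ?c j k l)"
      by (rule sum.cong[OF refl], rule sum.swap)
    also have "\<dots> = (\<Sum>j\<in>W. \<Sum>k\<in>W. \<Sum>l\<in>W. ?c j k l)"
      by (rule sum.swap)
    finally show "(\<Sum>k\<in>W. \<Sum>l\<in>W. of_bool (k \<le> i \<and> i < l) * lower_row_sum A i * Y k l)
        = (\<Sum>j\<in>W. \<Sum>k\<in>W. \<Sum>l\<in>W. ?c j k l)" .
  qed
qed

lemma dform_diagm_upper_col_sum:
  assumes A: "banded R A" and X: "banded R X"
    and W: "finite W" "{1 - 2 * int R .. int n + int R} \<subseteq> W"
  shows "dform n W X (diagm (upper_col_sum A)) =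
    (\<Sum>i\<in>{1..int n}. \<Sum>j\<in>W. \<Sum>k\<in>W. \<Sum>l\<in>W.
      of_bool (j < l \<and> l \<le> i) * X i j * (of_bool (k < l) * A k l))"
    (is "_ = (\<Sum>i\<in>_. \<Sum>j\<in>_. \<Sum>k\<in>_. \<Sum>l\<in>_. ?c i j k l)")
proof -
  have swap: "(\<Sum>i\<in>{1..int n}. \<Sum>j\<in>W. \<Sum>k\<in>W. \<Sum>l\<in>W. ?c i j k l)
      = (\<Sum>i\<in>{1..int n}. \<Sum>j\<in>W. \<Sum>l\<in>W. \<Sum>k\<in>W. ?c i j k l)"
    by (rule sum.cong[OF refl], rule sum.cong[OF refl], rule sum.swap)
  show ?thesis
    unfolding dform_diagm_right[OF W(1)] swap
  proof (rule sum.cong[OF refl], rule sum.cong[OF refl], rule sum.cong[OF refl])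
    fix i j l assume i: "i \<in> {1..int n}"
    show "of_bool (l \<le> i \<and> j < l) * X i j * upper_col_sum A l = (\<Sum>k\<in>W. ?c i j k l)"
    proof (cases "X i j \<noteq> 0 \<and> j < l \<and> l \<le> i")
      case True
      \<comment> \<open>Then l > j \<ge> i - R \<ge> 1 - R, so the column of A above l lies in the window.\<close>
      then have "\<bar>i - j\<bar> \<le> int R" using banded_dist[OF X] by blast
      then have "{l - int R ..< l} \<subseteq> W" using W(2) i True by auto
      then show ?thesis
        using True by (simp add: upper_col_sum_eq_sum_window[OF A W(1)] sum_distrib_left)
    qed auto
  qed
qed

lemma dform_lower_upper:
  assumes A: "banded R A" and W: "finite W" "{1 - 2 * int R .. int n + int R} \<subseteq> W"
  shows "dform n W (lower_part A) (upper_part A) =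
    dform n W (diagm (lower_row_sum A)) (upper_part A) +
    dform n W (lower_part A) (diagm (upper_col_sum A))"
proof -
  have split: "of_bool (k \<le> i \<and> j < l) * lower_part A i j * upper_part A k l =
      of_bool (k \<le> i \<and> i < l) * (of_bool (j < i) * A i j) * upper_part A k l
    + of_bool (j < l \<and> l \<le> i) * lower_part A i j * (of_bool (k < l) * A k l)" for i j k l
    by (auto simp: lower_part_def upper_part_def)
  show ?thesis
    unfolding dform_diagm_lower_row_sum[OF A W]
      dform_diagm_upper_col_sum[OF A banded_lower_part[OF A] W]
    unfolding dform_def split sum.distrib ..
qed

theorem lemma3p10p2:
  fixes n :: nat and A :: "int \<Rightarrow> int \<Rightarrow> nat" and lam :: "int \<Rightarrow> nat"
  assumes "0 < n"
    and "A \<in> Theta n"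
    and "\<forall>i. A i i = 0"
    and "lam \<in> Nseq n"
  shows "dB n (madd A (diagm lam)) =
           dB n (madd (upper_part A) (diagm (mu_seq A lam)))
         + dB n (madd (lower_part A) (diagm (nu_seq A lam)))"
proof -
  obtain R where A: "banded R A" using Theta_banded[OF assms(2,1)] .
  define W where "W = {1 - 2 * int R .. int n + int R}"
  let ?U = "upper_part A" and ?L = "lower_part A" and ?D = "diagm lam"
  have W: "finite W" "{1 - 2 * int R .. int n + int R} \<subseteq> W" unfolding W_def by auto
  have bU: "banded R ?U" and bL: "banded R ?L"
    using A by (auto intro: banded_upper_part banded_lower_part)
  have "madd A ?D = madd (madd ?U ?L) ?D"
    using assms(3) unfolding madd_def upper_part_def lower_part_def by (auto simp: fun_eq_iff)
  then have "dB n (madd A ?D) = dform n W (madd (madd ?U ?L) ?D) (madd (madd ?U ?L) ?D)"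
    using dB_eq_dform[OF _ W] bU bL by (simp add: banded_madd banded_diagm)
  moreover have "diagm (mu_seq A lam) = madd ?D (diagm (lower_row_sum A))"
    and "diagm (nu_seq A lam) = madd ?D (diagm (upper_col_sum A))"
    unfolding mu_seq_def nu_seq_def lower_row_sum_def upper_col_sum_def diagm_def madd_def
    by (auto simp: fun_eq_iff)
  then have "dB n (madd ?U (diagm (mu_seq A lam))) =
      dform n W (madd ?U (madd ?D (diagm (lower_row_sum A))))
        (madd ?U (madd ?D (diagm (lower_row_sum A))))"
    and "dB n (madd ?L (diagm (nu_seq A lam))) =
      dform n W (madd ?L (madd ?D (diagm (upper_col_sum A))))
        (madd ?L (madd ?D (diagm (upper_col_sum A))))"
    using dB_eq_dform[OF _ W] bU bL by (simp_all add: banded_madd banded_diagm)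
  ultimately show ?thesis
    by (simp add: dform_madd_left dform_madd_right dform_diagm_diagm dform_upper_diagm
        dform_diagm_lower dform_upper_lower dform_lower_upper[OF A W])
qed

end
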